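(* Let $n\ge 7$ and let $G$ be one of the following graphs: $K_1\vee \frac{n-1}{4}K_4$ with $n\equiv 1\pmod 4$; $K_1\vee (K_1\cup \frac{n-2}{4}K_4)$ with $n\equiv 2\pmod 4$; $K_1\vee (K_{1,1}\cup \frac{n-3}{4}K_4)$ with $n\equiv 3\pmod 4$; or $K_1\vee (K_{1,s}^+\cup \frac{n-s-2}{4}K_4)$ with $2\le s\le n-6$. Then $q(G)<q(K_{1,1,n-2}^+)$.
   Context: $q(G)$ denotes the largest eigenvalue of the signless Laplacian matrix $Q(G)=D(G)+A(G)$ ($A(G)$ adjacency matrix, $D(G)$ diagonal degree matrix). $K_m$ is the complete graph on $m$ vertices, $kH$ is the disjoint union of $k$ copies of $H$, $\cup$ is disjoint union, and $G\vee H$ is the join (disjoint union plus all edges between $V(G)$ and $V(H)$). $K_{1,s}$ is the star with $s$ leaves; for $s\ge2$, $K_{1,s}^+$ is obtained from $K_{1,s}$ by adding one edge between two leaves. $K_{1,1,n-2}^+$ is obtained from the complete tripartite graph $K_{1,1,n-2}$ by adding one edge inside the part of size $n-2$. In the last family it is implicit that $\frac{n-s-2}{4}$ is an integer. *)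

theory Defs
  imports Main "Jordan_Normal_Form.Char_Poly"
begin

text \<open>A finite simple graph on the vertex set {0..<n}: a pair (n, E) with adjacency E.
  Only E restricted to {0..<n} matters; all constructions below produce
  symmetric, irreflexive relations.\<close>
type_synonym graph = "nat \<times> (nat \<Rightarrow> nat \<Rightarrow> bool)"

definition gorder :: "graph \<Rightarrow> nat" where "gorder G = fst G"
definition adj :: "graph \<Rightarrow> nat \<Rightarrow> nat \<Rightarrow> bool" where "adj G = snd G"

definition degree :: "graph \<Rightarrow> nat \<Rightarrow> nat" where
  "degree G i = card {j. j < gorder G \<and> adj G i j}"

definition signless_laplacian :: "graph \<Rightarrow> real mat" where
  "signless_laplacian G = mat (gorder G) (gorder G)
     (\<lambda>(i,j). (if i = j then real (degree G i) else 0) + (if adj G i j then 1 else 0))"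

definition q :: "graph \<Rightarrow> real" where
  "q G = Max {k. eigenvalue (signless_laplacian G) k}"

definition complete :: "nat \<Rightarrow> graph" where
  "complete m = (m, \<lambda>i j. i < m \<and> j < m \<and> i \<noteq> j)"

definition gunion :: "graph \<Rightarrow> graph \<Rightarrow> graph" where
  "gunion G H = (gorder G + gorder H, \<lambda>i j.
     (i < gorder G \<and> j < gorder G \<and> adj G i j) \<or>
     (gorder G \<le> i \<and> gorder G \<le> j \<and> i < gorder G + gorder H \<and> j < gorder G + gorder H
        \<and> adj H (i - gorder G) (j - gorder G)))"

definition gjoin :: "graph \<Rightarrow> graph \<Rightarrow> graph" where
  "gjoin G H = (gorder G + gorder H, \<lambda>i j.
     adj (gunion G H) i j \<or>
     (i < gorder G \<and> gorder G \<le> j \<and> j < gorder G + gorder H) \<or>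
     (j < gorder G \<and> gorder G \<le> i \<and> i < gorder G + gorder H))"

fun copies :: "nat \<Rightarrow> graph \<Rightarrow> graph" where
  "copies 0 H = (0, \<lambda>i j. False)"
| "copies (Suc k) H = gunion H (copies k H)"

definition star :: "nat \<Rightarrow> graph" where
  "star s = (s + 1, \<lambda>i j. i \<le> s \<and> j \<le> s \<and> i \<noteq> j \<and> (i = 0 \<or> j = 0))"

definition star_plus :: "nat \<Rightarrow> graph" where
  "star_plus s = (s + 1, \<lambda>i j. adj (star s) i j \<or> {i, j} = {1, 2})"

text \<open>K_{1,1,n-2}^+: vertices 0,1 form the two singleton parts, {2..n-1} the big part,
  with the extra edge 2--3 inside the big part.\<close>
definition K11plus :: "nat \<Rightarrow> graph" where
  "K11plus n = (n, \<lambda>i j. i < n \<and> j < n \<and> i \<noteq> j \<and> (i < 2 \<or> j < 2 \<or> {i, j} = {2, 3}))"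

end

theory Submission
  imports Defs
begin

(* A positive vector w with Q(G) w <= T w componentwise bounds every eigenvalue of Q(G) by T
   (compare an eigenvector v with w at an index where |v_j| / w_j is maximal).  Each of the four
   graphs is K_1 joined with X plus copies of K_4; a test vector that is constant on the copies of
   K_4 and suitably chosen on the apex and on X turns Q(G) w <= (n + 43/25) w into polynomial
   inequalities in n and s with nonnegative coefficients.  On the other side, K_{1,1,n-2}^+ has the
   positive eigenvector (1, 1, p, p, r, ..., r) whose eigenvalue is a root of a cubic that is negative
   at n + 43/25 and positive at n + 4, so q(K_{1,1,n-2}^+) > n + 43/25. *)

section \<open>Signless Laplacian eigenvalues\<close>

definition neighbours :: "graph \<Rightarrow> nat \<Rightarrow> nat set" where
  "neighbours G i = {j. j < gorder G \<and> adj G i j}"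

lemma degree_eq_card_neighbours: "degree G i = card (neighbours G i)"
  by (simp add: degree_def neighbours_def)

lemma finite_neighbours [simp]: "finite (neighbours G i)"
  by (simp add: neighbours_def)

lemma neighbours_less: "j \<in> neighbours G i \<Longrightarrow> j < gorder G"
  by (simp add: neighbours_def)

lemma signless_laplacian_carrier: "signless_laplacian G \<in> carrier_mat (gorder G) (gorder G)"
  by (simp add: signless_laplacian_def)

lemma signless_laplacian_mult_vec:
  assumes i: "i < gorder G" and v: "v \<in> carrier_vec (gorder G)"
  shows "(signless_laplacian G *\<^sub>v v) $ i = (\<Sum>j\<in>neighbours G i. v $ i + v $ j)"
proof -
  have "(signless_laplacian G *\<^sub>v v) $ i
      = (\<Sum>j<gorder G. (if j = i then real (degree G i) * v $ i else 0) + (if adj G i j then v $ j else 0))"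
    using i v by (auto simp: signless_laplacian_def scalar_prod_def lessThan_atLeast0 distrib_right
        intro!: sum.cong)
  also have "\<dots> = real (degree G i) * v $ i + (\<Sum>j\<in>neighbours G i. v $ j)"
    using i by (simp add: sum.distrib neighbours_def sum.inter_filter[symmetric] lessThan_def)
  finally show ?thesis
    by (simp add: sum.distrib degree_def neighbours_def)
qed

lemma signless_laplacian_eigenvalueI:
  fixes u :: "nat \<Rightarrow> real"
  assumes "i0 < gorder G" "u i0 \<noteq> 0"
    and eq: "\<And>i. i < gorder G \<Longrightarrow> (\<Sum>j\<in>neighbours G i. u i + u j) = k * u i"
  shows "eigenvalue (signless_laplacian G) k"
proof -
  let ?v = "vec (gorder G) u"
  have "signless_laplacian G *\<^sub>v ?v = k \<cdot>\<^sub>v ?v"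
  proof (rule eq_vecI)
    fix i assume "i < dim_vec (k \<cdot>\<^sub>v ?v)"
    then have i: "i < gorder G" by simp
    have "(\<Sum>j\<in>neighbours G i. ?v $ i + ?v $ j) = (\<Sum>j\<in>neighbours G i. u i + u j)"
      using i by (intro sum.cong) (auto dest: neighbours_less)
    then show "(signless_laplacian G *\<^sub>v ?v) $ i = (k \<cdot>\<^sub>v ?v) $ i"
      using eq[OF i] i by (simp add: signless_laplacian_mult_vec)
  qed (simp add: signless_laplacian_def)
  moreover have "?v \<noteq> 0\<^sub>v (gorder G)"
    using assms(1,2) by (metis index_vec index_zero_vec(1))
  ultimately show ?thesis
    unfolding eigenvalue_def eigenvector_def
    by (intro exI[of _ ?v]) (simp add: signless_laplacian_def)
qed

lemma eigenvalue_le_of_positive_subeigenvector: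
  fixes w :: "nat \<Rightarrow> real"
  assumes pos: "\<And>j. j < gorder G \<Longrightarrow> 0 < w j"
    and sub: "\<And>i. i < gorder G \<Longrightarrow> (\<Sum>j\<in>neighbours G i. w i + w j) \<le> T * w i"
    and ev: "eigenvalue (signless_laplacian G) k"
  shows "k \<le> T"
proof -
  let ?N = "gorder G"
  obtain v where v: "v \<in> carrier_vec ?N" "v \<noteq> 0\<^sub>v ?N" "signless_laplacian G *\<^sub>v v = k \<cdot>\<^sub>v v"
    using ev unfolding eigenvalue_def eigenvector_def by (auto simp: signless_laplacian_def)
  obtain j0 where j0: "j0 < ?N" "v $ j0 \<noteq> 0"
  proof (rule ccontr)
    assume "\<not> thesis"
    then have "v = 0\<^sub>v ?N" using v(1) that by (intro eq_vecI) auto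
    with v(2) show False by simp
  qed
  define r where "r j = \<bar>v $ j\<bar> / w j" for j
  obtain i where i: "i < ?N" and i_max: "r i = Max (r ` {..<?N})"
    using Max_in[of "r ` {..<?N}"] j0(1) by fastforce
  have r_max: "r j \<le> r i" if "j < ?N" for j
    unfolding i_max using that by simp
  have "0 < r j0" using j0 pos[OF j0(1)] by (simp add: r_def)
  with r_max[OF j0(1)] have r_pos: "0 < r i" by linarith
  have v_le: "\<bar>v $ j\<bar> \<le> r i * w j" if "j < ?N" for j
    using r_max[OF that] pos[OF that] by (simp add: r_def field_simps)
  have v_i: "\<bar>v $ i\<bar> = r i * w i" using pos[OF i] by (simp add: r_def)
  have "\<bar>k\<bar> * \<bar>v $ i\<bar> = \<bar>\<Sum>j\<in>neighbours G i. v $ i + v $ j\<bar>"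
    using v i by (metis abs_mult carrier_vecD index_smult_vec(1) signless_laplacian_mult_vec)
  also have "\<dots> \<le> (\<Sum>j\<in>neighbours G i. r i * (w i + w j))"
    using v_le i by (intro order_trans[OF sum_abs] sum_mono)
      (auto simp: distrib_left dest: neighbours_less intro!: order_trans[OF abs_triangle_ineq] add_mono)
  also have "\<dots> \<le> r i * (T * w i)"
    using sub[OF i] r_pos by (simp add: sum_distrib_left[symmetric])
  also have "\<dots> = T * \<bar>v $ i\<bar>" using v_i by simp
  finally have "\<bar>k\<bar> * \<bar>v $ i\<bar> \<le> T * \<bar>v $ i\<bar>" .
  moreover have "0 < \<bar>v $ i\<bar>" using v_i r_pos pos[OF i] by simp
  ultimately have "\<bar>k\<bar> \<le> T" by simp
  then show ?thesis by simp
qed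

lemma finite_signless_laplacian_eigenvalues: "finite {k. eigenvalue (signless_laplacian G) k}"
proof -
  let ?p = "char_poly (signless_laplacian G)"
  have "?p \<noteq> 0"
    using degree_monic_char_poly[OF signless_laplacian_carrier] by (metis leading_coeff_0_iff zero_neq_one)
  then have "finite {k. poly ?p k = 0}" by (rule poly_roots_finite)
  then show ?thesis by (simp add: eigenvalue_root_char_poly[OF signless_laplacian_carrier])
qed

lemma eigenvalue_le_q: "eigenvalue (signless_laplacian G) e \<Longrightarrow> e \<le> q G"
  unfolding q_def using finite_signless_laplacian_eigenvalues by (intro Max_ge) auto

text \<open>The hypothesis on e only serves to make the set under Max in q nonempty.\<close>

lemma q_le_of_positive_subeigenvector:
  fixes w :: "nat \<Rightarrow> real"
  assumes "eigenvalue (signless_laplacian G) e"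
    and "\<And>j. j < gorder G \<Longrightarrow> 0 < w j"
    and "\<And>i. i < gorder G \<Longrightarrow> (\<Sum>j\<in>neighbours G i. w i + w j) \<le> T * w i"
  shows "q G \<le> T"
  unfolding q_def using assms finite_signless_laplacian_eigenvalues
  by (subst Max_le_iff) (auto intro: eigenvalue_le_of_positive_subeigenvector)

lemma eigenvalue_of_adjacent_twins:
  assumes a: "a < gorder G" and b: "b < gorder G"
    and ab: "adj G a b" "adj G b a" and irrefl: "\<not> adj G a a" "\<not> adj G b b"
    and sym: "\<And>j. adj G j a = adj G a j" "\<And>j. adj G j b = adj G b j"
    and twins: "\<And>j. j \<noteq> a \<Longrightarrow> j \<noteq> b \<Longrightarrow> adj G a j = adj G b j"
  shows "eigenvalue (signless_laplacian G) (real (degree G a) - 1)"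
proof -
  define u :: "nat \<Rightarrow> real" where "u j = (if j = a then 1 else 0) - (if j = b then 1 else 0)" for j
  have "a \<noteq> b" using ab irrefl by auto
  have common: "neighbours G a - {b} = neighbours G b - {a}"
    using twins irrefl by (auto simp: neighbours_def; metis)
  have memb: "b \<in> neighbours G a" "a \<in> neighbours G b" "a \<notin> neighbours G a" "b \<notin> neighbours G b"
    using a b ab irrefl by (simp_all add: neighbours_def)
  then have "degree G a = degree G b"
    unfolding degree_eq_card_neighbours by (metis card.remove common finite_neighbours)
  have row: "(\<Sum>j\<in>neighbours G i. u i + u j) = real (degree G i) * u i
      + ((if a \<in> neighbours G i then 1 else 0) - (if b \<in> neighbours G i then 1 else 0))" for i
    unfolding u_def by (simp add: sum.distrib sum_subtractf sum.delta degree_eq_card_neighbours)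
  have other: "a \<in> neighbours G i \<longleftrightarrow> b \<in> neighbours G i" if "i \<noteq> a" "i \<noteq> b" for i
    using a b sym twins[OF that] by (simp add: neighbours_def)
  show ?thesis
  proof (rule signless_laplacian_eigenvalueI[of a _ u])
    fix i assume "i < gorder G"
    consider "i = a" | "i = b" | "i \<noteq> a" "i \<noteq> b" by blast
    then show "(\<Sum>j\<in>neighbours G i. u i + u j) = (real (degree G a) - 1) * u i"
      unfolding row
      by cases (use \<open>a \<noteq> b\<close> other \<open>degree G a = degree G b\<close> memb in \<open>auto simp: u_def\<close>)
  qed (use a \<open>a \<noteq> b\<close> in \<open>simp_all add: u_def\<close>)
qed

section \<open>Cones over disjoint copies of K_4\<close>

lemma gorder_pair [simp]: "gorder (n, E) = n"
  by (simp add: gorder_def)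

lemma adj_pair [simp]: "adj (n, E) = E"
  by (simp add: adj_def)

lemma gorder_complete [simp]: "gorder (complete m) = m"
  by (simp add: complete_def)

lemma adj_complete [simp]: "adj (complete m) i j \<longleftrightarrow> i < m \<and> j < m \<and> i \<noteq> j"
  by (simp add: complete_def)

lemma gorder_gunion [simp]: "gorder (gunion G H) = gorder G + gorder H"
  by (simp add: gunion_def)

lemma gorder_gjoin [simp]: "gorder (gjoin G H) = gorder G + gorder H"
  by (simp add: gjoin_def)

lemma gorder_copies [simp]: "gorder (copies k H) = k * gorder H"
  by (induction k) auto

lemma adj_copies_complete:
  assumes "0 < m"
  shows "adj (copies k (complete m)) i j \<longleftrightarrow> i < k * m \<and> j < k * m \<and> i \<noteq> j \<and> i div m = j div m"
proof (induction k arbitrary: i j)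
  case 0
  then show ?case by simp
next
  case (Suc k)
  have div_eq: "i div m = j div m \<longleftrightarrow>
      (i < m \<and> j < m) \<or> (m \<le> i \<and> m \<le> j \<and> (i - m) div m = (j - m) div m)"
    using assms by (cases "m \<le> i"; cases "m \<le> j") (simp_all add: le_div_geq)
  show ?case
    unfolding div_eq by (auto simp: gunion_def Suc.IH)
qed

definition cone_K4s :: "graph \<Rightarrow> nat \<Rightarrow> graph" where
  "cone_K4s X k = gjoin (complete 1) (gunion X (copies k (complete 4)))"

lemma gorder_cone_K4s [simp]: "gorder (cone_K4s X k) = gorder X + 1 + 4 * k"
  by (simp add: cone_K4s_def)

lemma adj_gjoin_complete1:
  "adj (gjoin (complete 1) H) i j \<longleftrightarrow> i < 1 + gorder H \<and> j < 1 + gorder H \<and>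
     ((i = 0 \<and> j \<noteq> 0) \<or> (j = 0 \<and> i \<noteq> 0) \<or> (i \<noteq> 0 \<and> j \<noteq> 0 \<and> adj H (i - 1) (j - 1)))"
  by (auto simp: gjoin_def gunion_def)

lemma adj_cone_K4s:
  "adj (cone_K4s X k) i j \<longleftrightarrow> i < gorder X + 1 + 4 * k \<and> j < gorder X + 1 + 4 * k \<and>
     ((i = 0 \<and> j \<noteq> 0) \<or> (j = 0 \<and> i \<noteq> 0)
      \<or> (1 \<le> i \<and> i \<le> gorder X \<and> 1 \<le> j \<and> j \<le> gorder X \<and> adj X (i - 1) (j - 1))
      \<or> (gorder X < i \<and> gorder X < j \<and> i \<noteq> j \<and> (i - gorder X - 1) div 4 = (j - gorder X - 1) div 4))"
proof -
  have "adj (gunion X (copies k (complete 4))) a b \<longleftrightarrow> (a < gorder X \<and> b < gorder X \<and> adj X a b)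
      \<or> (gorder X \<le> a \<and> gorder X \<le> b \<and> a < gorder X + 4 * k \<and> b < gorder X + 4 * k
         \<and> a \<noteq> b \<and> (a - gorder X) div 4 = (b - gorder X) div 4)" for a b
    by (auto simp: gunion_def adj_copies_complete)
  then show ?thesis
    unfolding cone_K4s_def adj_gjoin_complete1
    by (cases i; cases j) (simp_all add: Suc_le_eq less_Suc_eq_le mult.commute[of k 4], blast)
qed

lemma neighbours_cone_K4s_apex: "neighbours (cone_K4s X k) 0 = {1..<gorder X + 1 + 4 * k}"
  by (auto simp: neighbours_def adj_cone_K4s)

lemma neighbours_cone_K4s_base:
  assumes "i < gorder X"
  shows "neighbours (cone_K4s X k) (Suc i) = insert 0 (Suc ` neighbours X i)"
proof -
  have "j \<in> neighbours (cone_K4s X k) (Suc i) \<longleftrightarrow> j \<in> insert 0 (Suc ` neighbours X i)" for j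
    using assms by (cases j) (auto simp: neighbours_def adj_cone_K4s)
  then show ?thesis by blast
qed

lemma nat_div_eq_iff:
  assumes "0 < n"
  shows "(m :: nat) div n = t \<longleftrightarrow> t * n \<le> m \<and> m < Suc t * n"
proof -
  have "m div n = t \<longleftrightarrow> t \<le> m div n \<and> m div n < Suc t" by linarith
  then show ?thesis
    using assms by (simp add: less_eq_div_iff_mult_less_eq div_less_iff_less_mult)
qed

lemma neighbours_cone_K4s_block:
  assumes "t < k" "r < 4"
  shows "neighbours (cone_K4s X k) (gorder X + 1 + 4 * t + r)
       = insert 0 ({gorder X + 1 + 4 * t..<gorder X + 5 + 4 * t} - {gorder X + 1 + 4 * t + r})"
proof -
  let ?m = "gorder X"
  have "(4 * t + r) div 4 = t"
    using assms(2) by (simp add: nat_div_eq_iff)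
  moreover have "(j - ?m - 1) div 4 = t \<longleftrightarrow> ?m + 1 + 4 * t \<le> j \<and> j < ?m + 5 + 4 * t" if "?m < j" for j
    using that by (simp add: nat_div_eq_iff) linarith
  ultimately show ?thesis
    using assms by (auto simp: neighbours_def adj_cone_K4s)
qed

lemma eigenvalue_cone_K4s:
  assumes "1 \<le> k"
  shows "eigenvalue (signless_laplacian (cone_K4s X k)) 3"
proof -
  let ?G = "cone_K4s X k" and ?a = "gorder X + 1"
  have "degree ?G ?a = 4"
    using neighbours_cone_K4s_block[of 0 k 0 X] assms by (simp add: degree_eq_card_neighbours)
  moreover have "eigenvalue (signless_laplacian ?G) (real (degree ?G ?a) - 1)"
    using assms by (intro eigenvalue_of_adjacent_twins[where b = "gorder X + 2"]) (simp_all add: adj_cone_K4s, blast+)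
  ultimately show ?thesis by simp
qed

lemma cone_K4s_vertex_cases:
  assumes "i < gorder (cone_K4s X k)"
  obtains "i = 0" | i' where "i = Suc i'" "i' < gorder X"
    | t r where "i = gorder X + 1 + 4 * t + r" "t < k" "r < 4"
proof (cases "i \<le> gorder X")
  case True
  with that show ?thesis by (cases i) auto
next
  case False
  then have "i = gorder X + 1 + 4 * ((i - gorder X - 1) div 4) + (i - gorder X - 1) mod 4" by simp
  moreover have "(i - gorder X - 1) div 4 < k"
    using assms False by (simp add: div_less_iff_less_mult)
  moreover have "(i - gorder X - 1) mod 4 < 4" by simp
  ultimately show ?thesis by (rule that(3))
qed

definition cone_weight :: "nat \<Rightarrow> real \<Rightarrow> (nat \<Rightarrow> real) \<Rightarrow> real \<Rightarrow> nat \<Rightarrow> real" where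
  "cone_weight m A x K j = (if j = 0 then A else if j \<le> m then x (j - 1) else K)"

lemma cone_weight_apex_row:
  fixes x :: "nat \<Rightarrow> real"
  shows "(\<Sum>j\<in>neighbours (cone_K4s X k) 0. cone_weight (gorder X) A x K 0 + cone_weight (gorder X) A x K j)
      = real (gorder X + 4 * k) * A + (\<Sum>i<gorder X. x i) + real (4 * k) * K"
proof -
  let ?m = "gorder X" and ?w = "cone_weight (gorder X) A x K"
  have "(\<Sum>j\<in>{1..<?m + 1 + 4 * k}. ?w j)
      = (\<Sum>j\<in>{Suc 0..<Suc ?m}. ?w j) + (\<Sum>j\<in>{?m + 1..<?m + 1 + 4 * k}. ?w j)"
    using sum.atLeastLessThan_concat[of "Suc 0" "Suc ?m" "?m + 1 + 4 * k" ?w] by simp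
  also have "(\<Sum>j\<in>{Suc 0..<Suc ?m}. ?w j) = (\<Sum>i<?m. x i)"
    unfolding sum.shift_bounds_Suc_ivl lessThan_atLeast0 by (simp add: cone_weight_def)
  also have "(\<Sum>j\<in>{?m + 1..<?m + 1 + 4 * k}. ?w j) = real (4 * k) * K"
    by (simp add: cone_weight_def)
  finally show ?thesis
    by (simp add: neighbours_cone_K4s_apex sum.distrib cone_weight_def)
qed

lemma cone_weight_base_row:
  fixes x :: "nat \<Rightarrow> real"
  assumes "i < gorder X"
  shows "(\<Sum>j\<in>neighbours (cone_K4s X k) (Suc i).
           cone_weight (gorder X) A x K (Suc i) + cone_weight (gorder X) A x K j)
      = (x i + A) + (\<Sum>j\<in>neighbours X i. x i + x j)"
proof -
  let ?w = "cone_weight (gorder X) A x K"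
  have "Suc j \<le> gorder X" if "j \<in> neighbours X i" for j
    using that by (simp add: neighbours_def Suc_le_eq)
  then have "(\<Sum>j\<in>neighbours X i. ?w (Suc i) + ?w (Suc j)) = (\<Sum>j\<in>neighbours X i. x i + x j)"
    using assms by (intro sum.cong) (auto simp: cone_weight_def)
  then show ?thesis
    using assms by (simp add: neighbours_cone_K4s_base sum.reindex cone_weight_def Suc_le_eq)
qed

lemma cone_weight_block_row:
  fixes x :: "nat \<Rightarrow> real"
  assumes "t < k" "r < 4" and i: "i = gorder X + 1 + 4 * t + r"
  shows "(\<Sum>j\<in>neighbours (cone_K4s X k) i. cone_weight (gorder X) A x K i + cone_weight (gorder X) A x K j)
      = 7 * K + A"
proof -
  let ?w = "cone_weight (gorder X) A x K" and ?B = "{gorder X + 1 + 4 * t..<gorder X + 5 + 4 * t}"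
  have "(\<Sum>j\<in>neighbours (cone_K4s X k) i. ?w i + ?w j) = (?w i + ?w 0) + (\<Sum>j\<in>?B - {i}. ?w i + ?w j)"
    unfolding i neighbours_cone_K4s_block[OF assms(1,2)] by simp
  also have "(\<Sum>j\<in>?B - {i}. ?w i + ?w j) = (\<Sum>j\<in>?B - {i}. 2 * K)"
    by (intro sum.cong) (auto simp: cone_weight_def i)
  also have "\<dots> = 6 * K"
    using assms(2) by (simp add: i)
  finally show ?thesis
    by (simp add: cone_weight_def i)
qed

lemma q_cone_K4s_le:
  fixes x :: "nat \<Rightarrow> real" and A K T :: real
  assumes k: "1 \<le> k"
    and pos: "0 < A" "0 < K" "\<And>i. i < gorder X \<Longrightarrow> 0 < x i"
    and apex: "real (gorder X + 4 * k) * A + (\<Sum>i<gorder X. x i) + real (4 * k) * K \<le> T * A"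
    and base: "\<And>i. i < gorder X \<Longrightarrow> (x i + A) + (\<Sum>j\<in>neighbours X i. x i + x j) \<le> T * x i"
    and block: "A + 7 * K \<le> T * K"
  shows "q (cone_K4s X k) \<le> T"
proof (rule q_le_of_positive_subeigenvector[OF eigenvalue_cone_K4s[OF k]])
  let ?w = "cone_weight (gorder X) A x K"
  show "0 < ?w j" for j
    using pos by (auto simp: cone_weight_def)
  fix i assume "i < gorder (cone_K4s X k)"
  then show "(\<Sum>j\<in>neighbours (cone_K4s X k) i. ?w i + ?w j) \<le> T * ?w i"
  proof (cases rule: cone_K4s_vertex_cases)
    case 1
    show ?thesis
      unfolding 1 cone_weight_apex_row using apex by (simp add: cone_weight_def)
  next
    case (2 i')
    show ?thesis
      unfolding 2(1) cone_weight_base_row[OF 2(2)] using base[OF 2(2)] 2(2) by (simp add: cone_weight_def)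
  next
    case (3 t r)
    show ?thesis
      unfolding cone_weight_block_row[OF 3(2,3,1)] using block 3 by (simp add: cone_weight_def)
  qed
qed

section \<open>Upper bounds for the four families\<close>

lemma neighbours_complete: "i < m \<Longrightarrow> neighbours (complete m) i = {..<m} - {i}"
  by (auto simp: neighbours_def)

lemma q_cone_K4s_complete_le:
  assumes m: "m \<le> 4" and k: "1 \<le> k" and n: "8 \<le> m + 1 + 4 * k"
  shows "q (cone_K4s (complete m) k) \<le> real (m + 1 + 4 * k) + 43/25"
proof -
  define T where "T = real (m + 1 + 4 * k) + 43/25"
  have "T * (T - 7) - (real (m + 4 * k) * (T - 7) + real (m + 4 * k)) = 43/25 * (real (m + 1 + 4 * k) - 8) + 249/625"
    unfolding T_def by (simp add: field_simps)
  moreover have "0 \<le> 43/25 * (real (m + 1 + 4 * k) - 8) + 249/625"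
    using n by simp
  ultimately have apex: "real (m + 4 * k) * (T - 7) + (\<Sum>i<m. 1) + real (4 * k) * 1 \<le> T * (T - 7)"
    by simp
  have base: "(1 + (T - 7)) + (\<Sum>j\<in>neighbours (complete m) i. 1 + 1) \<le> T * 1" if "i < m" for i
    using that m by (simp add: neighbours_complete)
  show ?thesis
    unfolding T_def[symmetric]
    by (rule q_cone_K4s_le[where x = "\<lambda>_. 1" and A = "T - 7" and K = 1, OF k _ _ _ _ base])
      (use n apex in \<open>simp_all add: T_def\<close>)
qed

lemma q_cone_K4s_complete2_le:
  assumes k: "1 \<le> k"
  shows "q (cone_K4s (complete 2) k) \<le> real (4 * k + 3) + 43/25"
proof -
  define T where "T = real (4 * k + 3) + 43/25"
  define y where "y = real (4 * k) - 4"
  have "0 \<le> y" using k by (simp add: y_def)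
  have "T * ((T - 7) * (T - 3)) - (real (2 + 4 * k) * ((T - 7) * (T - 3)) + 2 * (T - 7) + real (4 * k) * (T - 3))
      = 6882/15625 + 5323/625 * y + 43/25 * y\<^sup>2"
    unfolding T_def y_def by (simp add: field_simps power2_eq_square)
  moreover have "0 \<le> 6882/15625 + 5323/625 * y + 43/25 * y\<^sup>2"
    using \<open>0 \<le> y\<close> by simp
  ultimately have apex: "real (2 + 4 * k) * ((T - 7) * (T - 3)) + (\<Sum>i<2::nat. T - 7) + real (4 * k) * (T - 3)
      \<le> T * ((T - 7) * (T - 3))"
    by simp
  have pos: "0 < T - 7" "0 < T - 3"
    using k by (simp_all add: T_def)
  then have "0 < (T - 7) * (T - 3)" by simp
  have base: "(T - 7 + (T - 7) * (T - 3)) + (\<Sum>j\<in>neighbours (complete 2) i. (T - 7) + (T - 7))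
      \<le> T * (T - 7)" if "i < gorder (complete 2)" for i
    using that by (simp add: neighbours_complete algebra_simps)
  have block: "(T - 7) * (T - 3) + 7 * (T - 3) \<le> T * (T - 3)"
    by (simp add: algebra_simps)
  show ?thesis
    unfolding T_def[symmetric]
    by (rule q_cone_K4s_le[OF k \<open>0 < (T - 7) * (T - 3)\<close> pos(2) _ _ base block]) (use pos apex in simp_all)
qed

lemma star_1_eq_complete_2: "star 1 = complete 2"
  by (auto simp: star_def complete_def fun_eq_iff)

lemma gorder_star_plus [simp]: "gorder (star_plus s) = s + 1"
  by (simp add: star_plus_def)

lemma neighbours_star_plus:
  assumes "2 \<le> s" "i \<le> s"
  shows "neighbours (star_plus s) i =
    (if i = 0 then {1..s} else if i = 1 then {0, 2} else if i = 2 then {0, 1} else {0})"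
  using assms by (auto simp: neighbours_def star_plus_def star_def doubleton_eq_iff)

lemma star_plus_weight_inequalities:
  fixes n s T u a b :: real
  assumes "2 \<le> s" "s + 6 \<le> n"
    and T: "T = n + 43/25" and u: "u = T - 7" and a: "a = T - 4" and b: "b = T - 2"
  shows "(n - 1) * (u*a*b) + (u*a*b/2 + (2 * (3*u*b/2) + (s - 2) * (3*u*a/2))) + (n - s - 2) * (a*b)
      \<le> T * (u*a*b)"
    and "(u*a*b/2 + u*a*b) + (s * (u*a*b/2) + (2 * (3*u*b/2) + (s - 2) * (3*u*a/2))) \<le> T * (u*a*b/2)"
proof -
  define y z where "y = s - 2" and "z = n - s - 6"
  have "0 \<le> y" "0 \<le> z"
    using assms(1,2) by (simp_all add: y_def z_def)
  have ns: "n = y + z + 8" "s = y + 2"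
    by (simp_all add: y_def z_def)
  define P where "P = 21107252/390625 + 1560917/15625 * z + 19294/625 * z^2 + 61/25 * z^3
    + 2211567/15625 * y + 39563/625 * y * z + 158/25 * y * z^2 + 20269/625 * y^2 + 133/25 * y^2 * z
    + 36/25 * y^3"
  define R where "R = 2532932/15625 + 63497/625 * z + 454/25 * z^2 + z^3 + 25173/625 * y
    + 497/25 * y * z + 2 * y * z^2 + 43/25 * y^2 + y^2 * z"
  have "T * (u*a*b) - ((n - 1) * (u*a*b) + (u*a*b/2 + (2 * (3*u*b/2) + (s - 2) * (3*u*a/2)))
      + (n - s - 2) * (a*b)) = P / 2"
    unfolding P_def T u a b ns by (simp add: field_simps power2_eq_square power3_eq_cube)
  moreover have "0 \<le> P"
    unfolding P_def using \<open>0 \<le> y\<close> \<open>0 \<le> z\<close> by simp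
  ultimately show "(n - 1) * (u*a*b) + (u*a*b/2 + (2 * (3*u*b/2) + (s - 2) * (3*u*a/2))) + (n - s - 2) * (a*b)
      \<le> T * (u*a*b)"
    by linarith
  have "T * (u*a*b/2) - ((u*a*b/2 + u*a*b) + (s * (u*a*b/2) + (2 * (3*u*b/2) + (s - 2) * (3*u*a/2))))
      = u / 2 * R"
    unfolding R_def T u a b ns by (simp add: field_simps power2_eq_square power3_eq_cube)
  moreover have "0 \<le> u / 2 * R"
    unfolding R_def u T ns using \<open>0 \<le> y\<close> \<open>0 \<le> z\<close> by simp
  ultimately show "(u*a*b/2 + u*a*b) + (s * (u*a*b/2) + (2 * (3*u*b/2) + (s - 2) * (3*u*a/2)))
      \<le> T * (u*a*b/2)"
    by linarith
qed

lemma q_cone_K4s_star_plus_le: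
  assumes s: "2 \<le> s" and k: "1 \<le> k"
  shows "q (cone_K4s (star_plus s) k) \<le> real (s + 2 + 4 * k) + 43/25"
proof -
  define T where "T = real (s + 2 + 4 * k) + 43/25"
  define u a b where "u = T - 7" and "a = T - 4" and "b = T - 2"
  define x where "x j = (if j = 0 then u*a*b/2 else if j \<le> 2 then 3*u*b/2 else 3*u*a/2)" for j :: nat
  have pos: "0 < u" "0 < a" "0 < b"
    using k by (simp_all add: u_def a_def b_def T_def)
  have "2 \<le> real s" "real s + 6 \<le> real (s + 2 + 4 * k)"
    using s k by simp_all
  note ineq = star_plus_weight_inequalities[OF this T_def u_def a_def b_def]
  have leaves: "(\<Sum>j\<in>{1..s}. x j) = 2 * (3*u*b/2) + (real s - 2) * (3*u*a/2)"
  proof -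
    have "{1..s} = {1, 2} \<union> {3..s}" using s by auto
    then have "(\<Sum>j\<in>{1..s}. x j) = x 1 + x 2 + (\<Sum>j\<in>{3..s}. x j)"
      by (simp add: sum.union_disjoint)
    also have "(\<Sum>j\<in>{3..s}. x j) = (\<Sum>j\<in>{3..s}. 3*u*a/2)"
      by (intro sum.cong) (auto simp: x_def)
    finally show ?thesis
      using s by (simp add: x_def of_nat_diff)
  qed
  have "{..<s + 1} = insert 0 {1..s}" by auto
  then have apex: "real (gorder (star_plus s) + 4 * k) * (u*a*b) + (\<Sum>j<gorder (star_plus s). x j)
      + real (4 * k) * (a*b) \<le> T * (u*a*b)"
    unfolding gorder_star_plus using ineq(1) s leaves by (simp add: x_def algebra_simps)
  have base: "(x i + u*a*b) + (\<Sum>j\<in>neighbours (star_plus s) i. x i + x j) \<le> T * x i"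
    if "i < gorder (star_plus s)" for i
  proof -
    have "i \<le> s" using that by simp
    then consider "i = 0" | "i = 1 \<or> i = 2" | "3 \<le> i" by linarith
    then show ?thesis
    proof cases
      case 1
      then show ?thesis
        using ineq(2) s leaves by (simp add: neighbours_star_plus sum.distrib x_def algebra_simps)
    next
      case 2
      then show ?thesis
        using s \<open>i \<le> s\<close> by (auto simp: neighbours_star_plus x_def a_def field_simps)
    next
      case 3
      then show ?thesis
        using s \<open>i \<le> s\<close> by (simp add: neighbours_star_plus x_def b_def field_simps)
    qed
  qed
  have block: "u*a*b + 7 * (a*b) \<le> T * (a*b)"
    by (simp add: u_def algebra_simps)
  show ?thesis
    unfolding T_def[symmetric]
    by (rule q_cone_K4s_le[OF k _ _ _ apex base block]) (use pos in \<open>simp_all add: x_def\<close>)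
qed

section \<open>A lower bound for K_{1,1,n-2}^+\<close>

lemma gorder_K11plus [simp]: "gorder (K11plus n) = n"
  by (simp add: K11plus_def)

lemma neighbours_K11plus:
  assumes "4 \<le> n"
  shows "i < 2 \<Longrightarrow> neighbours (K11plus n) i = {..<n} - {i}"
    and "neighbours (K11plus n) 2 = {0, 1, 3}"
    and "neighbours (K11plus n) 3 = {0, 1, 2}"
    and "4 \<le> i \<Longrightarrow> i < n \<Longrightarrow> neighbours (K11plus n) i = {0, 1}"
  using assms by (auto simp: neighbours_def K11plus_def doubleton_eq_iff)

text \<open>Eliminating p and r from the eigenvalue equations x p = 4 p + 2, x r = 2 r + 2 and
  x = n + 2 p + (n - 4) r of the vector (1, 1, p, p, r, ..., r) gives this cubic.\<close>

definition K11plus_cubic :: "real \<Rightarrow> real \<Rightarrow> real" where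
  "K11plus_cubic n x = (x - n) * (x - 4) * (x - 2) - 4 * (x - 2) - 2 * (n - 4) * (x - 4)"

lemma eigenvalue_K11plus:
  assumes n: "4 \<le> n" and x: "4 < x" and root: "K11plus_cubic (real n) x = 0"
  shows "eigenvalue (signless_laplacian (K11plus n)) x"
proof -
  define p r where "p = 2 / (x - 4)" and "r = 2 / (x - 2)"
  define u where "u j = (if j < 2 then 1 else if j < 4 then p else r)" for j :: nat
  have p: "x * p = 4 * p + 2" and r: "x * r = 2 * r + 2"
    using x by (simp_all add: p_def r_def field_simps)
  have "2 * p + (real n - 4) * r = (4 * (x - 2) + 2 * (real n - 4) * (x - 4)) / ((x - 4) * (x - 2))"
    using x by (simp add: p_def r_def field_simps)
  also have "4 * (x - 2) + 2 * (real n - 4) * (x - 4) = (x - real n) * ((x - 4) * (x - 2))"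
    using root unfolding K11plus_cubic_def by (simp add: algebra_simps; linarith)
  also have "\<dots> / ((x - 4) * (x - 2)) = x - real n"
    using x by simp
  finally have apex: "x = real n + 2 * p + (real n - 4) * r" by simp
  have "(\<Sum>j<n. u j) = (\<Sum>j<4. u j) + (\<Sum>j\<in>{4..<n}. u j)"
    using n by (simp add: lessThan_atLeast0 sum.atLeastLessThan_concat)
  also have "(\<Sum>j\<in>{4..<n}. u j) = (\<Sum>j\<in>{4..<n}. r)"
    by (intro sum.cong) (auto simp: u_def)
  finally have total: "(\<Sum>j<n. u j) = 2 + 2 * p + (real n - 4) * r"
    using n by (simp add: u_def numeral_eq_Suc of_nat_diff)
  show ?thesis
  proof (rule signless_laplacian_eigenvalueI[of 0 _ u])
    fix i assume "i < gorder (K11plus n)"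
    then have i: "i < n" by simp
    consider "i < 2" | "i = 2 \<or> i = 3" | "4 \<le> i" by linarith
    then show "(\<Sum>j\<in>neighbours (K11plus n) i. u i + u j) = x * u i"
    proof cases
      case 1
      then show ?thesis
        using n i apex total by (simp add: neighbours_K11plus sum_diff1 sum.distrib u_def)
    next
      case 2
      then show ?thesis
        using n i p by (elim disjE) (simp_all add: neighbours_K11plus u_def)
    next
      case 3
      then show ?thesis
        using n i r by (simp add: neighbours_K11plus u_def)
    qed
  qed (use n in \<open>simp_all add: u_def\<close>)
qed

lemma K11plus_cubic_root_above:
  fixes n :: real
  assumes "7 \<le> n"
  shows "\<exists>x > n + 43/25. K11plus_cubic n x = 0"
proof -
  let ?f = "K11plus_cubic n"
  have "?f (n + 43/25) = - 7/25 * (n - 1299/175)\<^sup>2 - 104/175"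
    unfolding K11plus_cubic_def by (simp add: field_simps power2_eq_square)
  moreover have "0 \<le> (n - 1299/175)\<^sup>2" by simp
  ultimately have neg: "?f (n + 43/25) < 0" by linarith
  have "?f (n + 4) = 2 * n\<^sup>2 + 12 * n - 8"
    unfolding K11plus_cubic_def by (simp add: algebra_simps power2_eq_square)
  moreover have "0 \<le> n\<^sup>2" by simp
  ultimately have "0 \<le> ?f (n + 4)"
    using assms by linarith
  moreover have "continuous_on {n + 43/25..n + 4} ?f"
    unfolding K11plus_cubic_def by (intro continuous_intros)
  ultimately obtain x where x: "n + 43/25 \<le> x" "?f x = 0"
    using IVT'[of ?f "n + 43/25" 0 "n + 4"] neg by auto
  moreover have "x \<noteq> n + 43/25"
    using neg x(2) by auto
  ultimately show ?thesis
    by (intro exI[of _ x]) simp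
qed

lemma q_K11plus_gt:
  assumes "7 \<le> n"
  shows "real n + 43/25 < q (K11plus n)"
proof -
  obtain x where "real n + 43/25 < x" "K11plus_cubic (real n) x = 0"
    using K11plus_cubic_root_above[of "real n"] assms by auto
  moreover from this have "eigenvalue (signless_laplacian (K11plus n)) x"
    using assms by (intro eigenvalue_K11plus) auto
  ultimately show ?thesis
    using eigenvalue_le_q by fastforce
qed

theorem lemma2p10:
  fixes n :: nat and G :: graph
  assumes "n \<ge> 7"
    and "(n mod 4 = 1 \<and> G = gjoin (complete 1) (copies ((n - 1) div 4) (complete 4)))
       \<or> (n mod 4 = 2 \<and> G = gjoin (complete 1)
              (gunion (complete 1) (copies ((n - 2) div 4) (complete 4))))
       \<or> (n mod 4 = 3 \<and> G = gjoin (complete 1)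
              (gunion (star 1) (copies ((n - 3) div 4) (complete 4))))
       \<or> (\<exists>s. 2 \<le> s \<and> s + 6 \<le> n \<and> 4 dvd (n - s - 2) \<and>
              G = gjoin (complete 1) (gunion (star_plus s) (copies ((n - s - 2) div 4) (complete 4))))"
  shows "q G < q (K11plus n)"
proof -
  have "q G \<le> real n + 43/25"
    using assms(2)
  proof (elim disjE conjE exE)
    assume "n mod 4 = 1" and G: "G = gjoin (complete 1) (copies ((n - 1) div 4) (complete 4))"
    define k where "k = (n - 1) div 4 - 1"
    have "(n - 1) div 4 = Suc k" "n = 4 + 1 + 4 * k" "1 \<le> k"
      using \<open>n mod 4 = 1\<close> assms(1) unfolding k_def by presburger+
    then show ?thesis
      using q_cone_K4s_complete_le[of 4 k] by (simp add: G cone_K4s_def)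
  next
    assume "n mod 4 = 2" and G: "G = gjoin (complete 1) (gunion (complete 1) (copies ((n - 2) div 4) (complete 4)))"
    have "n = 1 + 1 + 4 * ((n - 2) div 4)" "2 \<le> (n - 2) div 4"
      using \<open>n mod 4 = 2\<close> assms(1) by presburger+
    then show ?thesis
      using q_cone_K4s_complete_le[of 1 "(n - 2) div 4"] by (simp add: G cone_K4s_def)
  next
    assume "n mod 4 = 3" and G: "G = gjoin (complete 1) (gunion (star 1) (copies ((n - 3) div 4) (complete 4)))"
    have "n = 4 * ((n - 3) div 4) + 3" "1 \<le> (n - 3) div 4"
      using \<open>n mod 4 = 3\<close> assms(1) by presburger+
    then show ?thesis
      unfolding G star_1_eq_complete_2
      using q_cone_K4s_complete2_le[of "(n - 3) div 4"] by (simp add: cone_K4s_def)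
  next
    fix s assume s: "2 \<le> s" "s + 6 \<le> n" "4 dvd (n - s - 2)"
      and G: "G = gjoin (complete 1) (gunion (star_plus s) (copies ((n - s - 2) div 4) (complete 4)))"
    have "n = s + 2 + 4 * ((n - s - 2) div 4)" "1 \<le> (n - s - 2) div 4"
      using s by (auto elim!: dvdE)
    then show ?thesis
      using q_cone_K4s_star_plus_le[OF s(1), of "(n - s - 2) div 4"] by (simp add: G cone_K4s_def)
  qed
  with q_K11plus_gt[OF assms(1)] show ?thesis by linarith
qed

end
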